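(* Suppose that for every $n\in\omega$, $\mathbb{P}_n$ is a pre-Pawlikowski lattice such that $\mathsf{S}_{\mathrm{fin}}(\mathbb{V}_{1_{\mathbb{P}_n}},\mathbb{V}_{1_{\mathbb{P}_n}})$ holds. Then $\mathbb{P}:=\prod_{n\in\omega}\mathbb{P}_n$, endowed with the pointwise ordering, is a pre-Pawlikowski lattice satisfying $\mathsf{S}_{\mathrm{fin}}(\mathbb{V}_{1_{\mathbb{P}}},\mathbb{V}_{1_{\mathbb{P}}})$, where $1_{\mathbb{P}}:=(1_{\mathbb{P}_n})_{n\in\omega}$.
   Context: A lattice is a poset where any two elements have a supremum and an infimum; it is bounded if it has a minimum $0$ and maximum $1$. A prime element of a bounded lattice is $q\neq 1$ such that $a\wedge b\leq q$ implies $a\leq q$ or $b\leq q$. The lattice has enough prime elements if whenever $a\not\leq b$ there is a prime $q$ with $b\leq q$ and $a\not\leq q$. A pre-Pawlikowski lattice is a bounded lattice with enough prime elements. For $p$ in a lattice $\mathbb{Q}$, $\mathbb{V}_p$ is the family of subsets $A\subseteq\mathbb{Q}$ with $\sup A=p$. $\mathsf{S}_{\mathrm{fin}}(\mathbb{V}_p,\mathbb{V}_p)$ means: for every sequence $(A_n)_{n\in\omega}$ of members of $\mathbb{V}_p$ there are finite $F_n\subseteq A_n$ with $\sup\bigcup_{n}F_n=p$. *)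

theory Defs
  imports Main
begin

definition partial_order_on :: "'a set \<Rightarrow> ('a \<Rightarrow> 'a \<Rightarrow> bool) \<Rightarrow> bool" where
  "partial_order_on C le \<longleftrightarrow>
     (\<forall>x\<in>C. le x x) \<and>
     (\<forall>x\<in>C. \<forall>y\<in>C. le x y \<and> le y x \<longrightarrow> x = y) \<and>
     (\<forall>x\<in>C. \<forall>y\<in>C. \<forall>z\<in>C. le x y \<and> le y z \<longrightarrow> le x z)"

definition is_sup :: "'a set \<Rightarrow> ('a \<Rightarrow> 'a \<Rightarrow> bool) \<Rightarrow> 'a set \<Rightarrow> 'a \<Rightarrow> bool" where
  "is_sup C le A s \<longleftrightarrow> s \<in> C \<and> (\<forall>a\<in>A. le a s) \<and>
     (\<forall>u\<in>C. (\<forall>a\<in>A. le a u) \<longrightarrow> le s u)"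

definition is_inf :: "'a set \<Rightarrow> ('a \<Rightarrow> 'a \<Rightarrow> bool) \<Rightarrow> 'a set \<Rightarrow> 'a \<Rightarrow> bool" where
  "is_inf C le A i \<longleftrightarrow> i \<in> C \<and> (\<forall>a\<in>A. le i a) \<and>
     (\<forall>u\<in>C. (\<forall>a\<in>A. le u a) \<longrightarrow> le u i)"

definition lattice_on :: "'a set \<Rightarrow> ('a \<Rightarrow> 'a \<Rightarrow> bool) \<Rightarrow> bool" where
  "lattice_on C le \<longleftrightarrow> partial_order_on C le \<and>
     (\<forall>x\<in>C. \<forall>y\<in>C. (\<exists>s. is_sup C le {x, y} s) \<and> (\<exists>i. is_inf C le {x, y} i))"

definition bounded_lattice_on :: "'a set \<Rightarrow> ('a \<Rightarrow> 'a \<Rightarrow> bool) \<Rightarrow> bool" where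
  "bounded_lattice_on C le \<longleftrightarrow> lattice_on C le \<and>
     (\<exists>b\<in>C. \<forall>x\<in>C. le b x) \<and> (\<exists>t\<in>C. \<forall>x\<in>C. le x t)"

definition ltop :: "'a set \<Rightarrow> ('a \<Rightarrow> 'a \<Rightarrow> bool) \<Rightarrow> 'a" where
  "ltop C le = (THE t. t \<in> C \<and> (\<forall>x\<in>C. le x t))"

definition lmeet :: "'a set \<Rightarrow> ('a \<Rightarrow> 'a \<Rightarrow> bool) \<Rightarrow> 'a \<Rightarrow> 'a \<Rightarrow> 'a" where
  "lmeet C le a b = (THE i. is_inf C le {a, b} i)"

definition prime_element :: "'a set \<Rightarrow> ('a \<Rightarrow> 'a \<Rightarrow> bool) \<Rightarrow> 'a \<Rightarrow> bool" where
  "prime_element C le q \<longleftrightarrow> q \<in> C \<and> q \<noteq> ltop C le \<and>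
     (\<forall>a\<in>C. \<forall>b\<in>C. le (lmeet C le a b) q \<longrightarrow> le a q \<or> le b q)"

definition enough_primes :: "'a set \<Rightarrow> ('a \<Rightarrow> 'a \<Rightarrow> bool) \<Rightarrow> bool" where
  "enough_primes C le \<longleftrightarrow>
     (\<forall>a\<in>C. \<forall>b\<in>C. \<not> le a b \<longrightarrow> (\<exists>q. prime_element C le q \<and> le b q \<and> \<not> le a q))"

definition pre_Pawlikowski :: "'a set \<Rightarrow> ('a \<Rightarrow> 'a \<Rightarrow> bool) \<Rightarrow> bool" where
  "pre_Pawlikowski C le \<longleftrightarrow> bounded_lattice_on C le \<and> enough_primes C le"

definition V_sets :: "'a set \<Rightarrow> ('a \<Rightarrow> 'a \<Rightarrow> bool) \<Rightarrow> 'a \<Rightarrow> 'a set set" where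
  "V_sets C le p = {A. A \<subseteq> C \<and> is_sup C le A p}"

definition S_fin_V :: "'a set \<Rightarrow> ('a \<Rightarrow> 'a \<Rightarrow> bool) \<Rightarrow> 'a \<Rightarrow> bool" where
  "S_fin_V C le p \<longleftrightarrow>
     (\<forall>A :: nat \<Rightarrow> 'a set. (\<forall>n. A n \<in> V_sets C le p) \<longrightarrow>
        (\<exists>F :: nat \<Rightarrow> 'a set. (\<forall>n. finite (F n) \<and> F n \<subseteq> A n) \<and>
            is_sup C le (\<Union>n. F n) p))"

definition prod_carrier :: "(nat \<Rightarrow> 'a set) \<Rightarrow> (nat \<Rightarrow> 'a) set" where
  "prod_carrier P = {f. \<forall>n. f n \<in> P n}"

definition prod_le :: "(nat \<Rightarrow> 'a \<Rightarrow> 'a \<Rightarrow> bool) \<Rightarrow> (nat \<Rightarrow> 'a) \<Rightarrow> (nat \<Rightarrow> 'a) \<Rightarrow> bool" where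
  "prod_le le f g \<longleftrightarrow> (\<forall>n. le n (f n) (g n))"

end

theory Submission
  imports Defs "HOL-Library.Nat_Bijection"
begin

text \<open>Suprema and infima in the product are computed coordinatewise; for a projection this uses
  that any bound u in one factor extends to the bound s(n := u) in the product. A prime q of the
  n-th factor yields the prime 1(n := q) of the product, which gives enough primes. For
  S_fin, split the index set \<omega> into the infinitely many infinite pieces {\<langle>n, m\<rangle> | m \<in> \<omega>}
  (Cantor pairing) and apply S_fin of the n-th factor to the n-th projections of the
  sets indexed by the n-th piece; finite selections of projections lift to finite selections
  of the original sets.\<close>

lemma partial_order_on_antisym:
  "partial_order_on C le \<Longrightarrow> x \<in> C \<Longrightarrow> y \<in> C \<Longrightarrow> le x y \<Longrightarrow> le y x \<Longrightarrow> x = y"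
  unfolding partial_order_on_def by blast

lemma is_inf_unique:
  "partial_order_on C le \<Longrightarrow> is_inf C le A i \<Longrightarrow> is_inf C le A j \<Longrightarrow> i = j"
  unfolding is_inf_def using partial_order_on_antisym[of C le i j] by blast

lemma is_sup_superset:
  assumes "is_sup C le B s" "B \<subseteq> B'" "\<forall>a\<in>B'. le a s"
  shows "is_sup C le B' s"
  using assms unfolding is_sup_def by blast

lemma ltop_eqI:
  assumes "partial_order_on C le" "t \<in> C" "\<forall>x\<in>C. le x t"
  shows "ltop C le = t"
  unfolding ltop_def
  by (rule the_equality) (use assms partial_order_on_antisym[OF assms(1)] in blast)+

lemma lattice_on_partial_order_on: "lattice_on C le \<Longrightarrow> partial_order_on C le"
  unfolding lattice_on_def by blast

lemma bounded_lattice_on_lattice_on: "bounded_lattice_on C le \<Longrightarrow> lattice_on C le"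
  unfolding bounded_lattice_on_def by blast

lemma bounded_lattice_on_partial_order_on:
  "bounded_lattice_on C le \<Longrightarrow> partial_order_on C le"
  by (intro lattice_on_partial_order_on bounded_lattice_on_lattice_on)

lemma ltop_in_carrier:
  assumes "bounded_lattice_on C le"
  shows "ltop C le \<in> C"
proof -
  obtain t where "t \<in> C" "\<forall>x\<in>C. le x t"
    using assms unfolding bounded_lattice_on_def by blast
  then show ?thesis
    using ltop_eqI[OF bounded_lattice_on_partial_order_on[OF assms]] by simp
qed

lemma ltop_greatest:
  assumes "bounded_lattice_on C le" "x \<in> C"
  shows "le x (ltop C le)"
proof -
  obtain t where "t \<in> C" "\<forall>x\<in>C. le x t"
    using assms unfolding bounded_lattice_on_def by blast
  then show ?thesis
    using assms ltop_eqI[OF bounded_lattice_on_partial_order_on[OF assms(1)]] by simp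
qed

lemma lmeet_is_inf:
  assumes "lattice_on C le" "a \<in> C" "b \<in> C"
  shows "is_inf C le {a, b} (lmeet C le a b)"
proof -
  obtain i where i: "is_inf C le {a, b} i"
    using assms unfolding lattice_on_def by blast
  have "lmeet C le a b = i"
    unfolding lmeet_def
    by (rule the_equality) (use i is_inf_unique[OF lattice_on_partial_order_on[OF assms(1)]] in blast)+
  with i show ?thesis by simp
qed

lemma S_fin_VD:
  fixes A :: "nat \<Rightarrow> 'a set"
  assumes "S_fin_V C le p" "\<forall>n. A n \<in> V_sets C le p"
  shows "\<exists>F. (\<forall>n. finite (F n) \<and> F n \<subseteq> A n) \<and> is_sup C le (\<Union>n. F n) p"
  using spec[OF assms(1)[unfolded S_fin_V_def], of A] assms(2) by (rule mp)

lemma mem_prod_carrier [simp]: "f \<in> prod_carrier P \<longleftrightarrow> (\<forall>n. f n \<in> P n)"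
  unfolding prod_carrier_def by simp

lemma partial_order_on_prod:
  assumes "\<And>n. partial_order_on (P n) (le n)"
  shows "partial_order_on (prod_carrier P) (prod_le le)"
  unfolding partial_order_on_def prod_le_def
proof (intro conjI ballI impI)
  fix f g assume "f \<in> prod_carrier P" "g \<in> prod_carrier P"
    "(\<forall>n. le n (f n) (g n)) \<and> (\<forall>n. le n (g n) (f n))"
  then show "f = g"
    by (intro ext partial_order_on_antisym[OF assms]) auto
qed (use assms[unfolded partial_order_on_def] in \<open>simp only: mem_prod_carrier; meson\<close>)+

lemma is_sup_prod_iff:
  assumes "A \<subseteq> prod_carrier P"
  shows "is_sup (prod_carrier P) (prod_le le) A s \<longleftrightarrow>
    (\<forall>n. is_sup (P n) (le n) ((\<lambda>f. f n) ` A) (s n))"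
proof
  assume sup: "is_sup (prod_carrier P) (prod_le le) A s"
  show "\<forall>n. is_sup (P n) (le n) ((\<lambda>f. f n) ` A) (s n)"
  proof (intro allI)
    fix n
    have "le n (s n) u" if "u \<in> P n" "\<forall>a\<in>A. le n (a n) u" for u
    proof -
      have "s(n := u) \<in> prod_carrier P" "\<forall>a\<in>A. prod_le le a (s(n := u))"
        using sup that unfolding is_sup_def prod_le_def by auto
      then have "prod_le le s (s(n := u))"
        using sup unfolding is_sup_def by blast
      then show ?thesis
        unfolding prod_le_def by (metis fun_upd_same)
    qed
    with sup show "is_sup (P n) (le n) ((\<lambda>f. f n) ` A) (s n)"
      unfolding is_sup_def prod_le_def by auto
  qed
next
  assume "\<forall>n. is_sup (P n) (le n) ((\<lambda>f. f n) ` A) (s n)"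
  then show "is_sup (prod_carrier P) (prod_le le) A s"
    unfolding is_sup_def prod_le_def by auto
qed

lemma is_inf_prod_iff:
  assumes "A \<subseteq> prod_carrier P"
  shows "is_inf (prod_carrier P) (prod_le le) A i \<longleftrightarrow>
    (\<forall>n. is_inf (P n) (le n) ((\<lambda>f. f n) ` A) (i n))"
proof
  assume inf: "is_inf (prod_carrier P) (prod_le le) A i"
  show "\<forall>n. is_inf (P n) (le n) ((\<lambda>f. f n) ` A) (i n)"
  proof (intro allI)
    fix n
    have "le n u (i n)" if "u \<in> P n" "\<forall>a\<in>A. le n u (a n)" for u
    proof -
      have "i(n := u) \<in> prod_carrier P" "\<forall>a\<in>A. prod_le le (i(n := u)) a"
        using inf that unfolding is_inf_def prod_le_def by auto
      then have "prod_le le (i(n := u)) i"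
        using inf unfolding is_inf_def by blast
      then show ?thesis
        unfolding prod_le_def by (metis fun_upd_same)
    qed
    with inf show "is_inf (P n) (le n) ((\<lambda>f. f n) ` A) (i n)"
      unfolding is_inf_def prod_le_def by auto
  qed
next
  assume "\<forall>n. is_inf (P n) (le n) ((\<lambda>f. f n) ` A) (i n)"
  then show "is_inf (prod_carrier P) (prod_le le) A i"
    unfolding is_inf_def prod_le_def by auto
qed

lemma lattice_on_prod:
  assumes lat: "\<And>n. lattice_on (P n) (le n)"
  shows "lattice_on (prod_carrier P) (prod_le le)"
  unfolding lattice_on_def
proof (intro conjI ballI)
  show "partial_order_on (prod_carrier P) (prod_le le)"
    using lattice_on_partial_order_on[OF lat] by (rule partial_order_on_prod)
  fix x y assume xy: "x \<in> prod_carrier P" "y \<in> prod_carrier P"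
  then have pair: "{x, y} \<subseteq> prod_carrier P" "(\<lambda>f. f n) ` {x, y} = {x n, y n}" for n
    by auto
  have "\<forall>n. \<exists>s. is_sup (P n) (le n) {x n, y n} s"
    using lat xy unfolding lattice_on_def by simp
  then obtain s where "\<forall>n. is_sup (P n) (le n) {x n, y n} (s n)"
    by metis
  then show "\<exists>s. is_sup (prod_carrier P) (prod_le le) {x, y} s"
    using is_sup_prod_iff[OF pair(1)] pair(2) by auto
  have "\<forall>n. \<exists>i. is_inf (P n) (le n) {x n, y n} i"
    using lat xy unfolding lattice_on_def by simp
  then obtain i where "\<forall>n. is_inf (P n) (le n) {x n, y n} (i n)"
    by metis
  then show "\<exists>i. is_inf (prod_carrier P) (prod_le le) {x, y} i"
    using is_inf_prod_iff[OF pair(1)] pair(2) by auto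
qed

lemma bounded_lattice_on_prod:
  assumes bl: "\<And>n. bounded_lattice_on (P n) (le n)"
  shows "bounded_lattice_on (prod_carrier P) (prod_le le)"
proof -
  have "\<forall>n. \<exists>b\<in>P n. \<forall>x\<in>P n. le n b x"
    using bl unfolding bounded_lattice_on_def by blast
  then obtain b where "\<forall>n. b n \<in> P n \<and> (\<forall>x\<in>P n. le n (b n) x)"
    by metis
  then have "\<exists>b\<in>prod_carrier P. \<forall>x\<in>prod_carrier P. prod_le le b x"
    unfolding prod_le_def by (intro bexI[of _ b]) auto
  moreover have "\<exists>t\<in>prod_carrier P. \<forall>x\<in>prod_carrier P. prod_le le x t"
    using ltop_in_carrier[OF bl] ltop_greatest[OF bl]
    by (intro bexI[of _ "\<lambda>n. ltop (P n) (le n)"]) (auto simp: prod_le_def)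
  moreover have "lattice_on (prod_carrier P) (prod_le le)"
    using bounded_lattice_on_lattice_on[OF bl] by (rule lattice_on_prod)
  ultimately show ?thesis
    unfolding bounded_lattice_on_def by blast
qed

lemma ltop_prod:
  assumes bl: "\<And>n. bounded_lattice_on (P n) (le n)"
  shows "ltop (prod_carrier P) (prod_le le) = (\<lambda>n. ltop (P n) (le n))"
  using ltop_in_carrier[OF bl] ltop_greatest[OF bl]
  by (intro ltop_eqI partial_order_on_prod bounded_lattice_on_partial_order_on[OF bl])
    (auto simp: prod_le_def)

lemma lmeet_prod:
  assumes lat: "\<And>n. lattice_on (P n) (le n)"
    and "a \<in> prod_carrier P" "b \<in> prod_carrier P"
  shows "lmeet (prod_carrier P) (prod_le le) a b = (\<lambda>n. lmeet (P n) (le n) (a n) (b n))"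
proof -
  have pair: "{a, b} \<subseteq> prod_carrier P" "(\<lambda>f. f n) ` {a, b} = {a n, b n}" for n
    using assms(2,3) by auto
  have "is_inf (prod_carrier P) (prod_le le) {a, b} (\<lambda>n. lmeet (P n) (le n) (a n) (b n))"
    unfolding is_inf_prod_iff[OF pair(1)] pair(2) using lmeet_is_inf[OF lat] assms(2,3) by simp
  then show ?thesis
    by (rule is_inf_unique[OF lattice_on_partial_order_on[OF lattice_on_prod[OF lat]]
        lmeet_is_inf[OF lattice_on_prod[OF lat] assms(2,3)]])
qed

lemma prime_element_prod:
  assumes bl: "\<And>m. bounded_lattice_on (P m) (le m)"
    and q: "prime_element (P n) (le n) q"
  shows "prime_element (prod_carrier P) (prod_le le) ((\<lambda>m. ltop (P m) (le m))(n := q))"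
    (is "prime_element _ _ ?Q")
  unfolding prime_element_def
proof (intro conjI ballI impI)
  have lat: "\<And>m. lattice_on (P m) (le m)"
    by (rule bounded_lattice_on_lattice_on[OF bl])
  have qP: "q \<in> P n" "q \<noteq> ltop (P n) (le n)"
    using q unfolding prime_element_def by auto
  then show "?Q \<in> prod_carrier P"
    using ltop_in_carrier[OF bl] by simp
  show "?Q \<noteq> ltop (prod_carrier P) (prod_le le)"
    unfolding ltop_prod[OF bl] using qP by (metis fun_upd_same)
  fix x y assume x: "x \<in> prod_carrier P" and y: "y \<in> prod_carrier P"
    and "prod_le le (lmeet (prod_carrier P) (prod_le le) x y) ?Q"
  then have "le n (lmeet (P n) (le n) (x n) (y n)) q"
    unfolding lmeet_prod[OF lat x y] prod_le_def by (metis fun_upd_same)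
  then have "le n (x n) q \<or> le n (y n) q"
    using q x y unfolding prime_element_def by simp
  moreover have "le m (x m) (?Q m) \<and> le m (y m) (?Q m)" if "m \<noteq> n" for m
    using that x y ltop_greatest[OF bl] by simp
  ultimately show "prod_le le x ?Q \<or> prod_le le y ?Q"
    unfolding prod_le_def by (metis fun_upd_same)
qed

lemma enough_primes_prod:
  assumes bl: "\<And>n. bounded_lattice_on (P n) (le n)"
    and ep: "\<And>n. enough_primes (P n) (le n)"
  shows "enough_primes (prod_carrier P) (prod_le le)"
  unfolding enough_primes_def
proof (intro ballI impI)
  fix a b assume a: "a \<in> prod_carrier P" and b: "b \<in> prod_carrier P"
    and "\<not> prod_le le a b"
  then obtain n where "\<not> le n (a n) (b n)"
    unfolding prod_le_def by blast
  then obtain q where q: "prime_element (P n) (le n) q" "le n (b n) q" "\<not> le n (a n) q"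
    using ep[of n] a b unfolding enough_primes_def mem_prod_carrier by blast
  define Q where "Q = (\<lambda>m. ltop (P m) (le m))(n := q)"
  have "prime_element (prod_carrier P) (prod_le le) Q"
    unfolding Q_def using bl q(1) by (rule prime_element_prod)
  moreover have "prod_le le b Q"
    unfolding Q_def prod_le_def using q(2) b ltop_greatest[OF bl] by simp
  moreover have "\<not> prod_le le a Q"
    unfolding Q_def prod_le_def using q(3) by (metis fun_upd_same)
  ultimately show "\<exists>Q. prime_element (prod_carrier P) (prod_le le) Q \<and>
      prod_le le b Q \<and> \<not> prod_le le a Q"
    by blast
qed

lemma pre_Pawlikowski_prod:
  assumes "\<And>n. pre_Pawlikowski (P n) (le n)"
  shows "pre_Pawlikowski (prod_carrier P) (prod_le le)"
  using assms unfolding pre_Pawlikowski_def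
  by (simp add: bounded_lattice_on_prod enough_primes_prod)

lemma V_sets_prod_proj:
  assumes "A \<in> V_sets (prod_carrier P) (prod_le le) s"
  shows "(\<lambda>f. f n) ` A \<in> V_sets (P n) (le n) (s n)"
proof -
  have A: "A \<subseteq> prod_carrier P" "is_sup (prod_carrier P) (prod_le le) A s"
    using assms unfolding V_sets_def by simp_all
  then have "is_sup (P n) (le n) ((\<lambda>f. f n) ` A) (s n)"
    using is_sup_prod_iff by blast
  moreover have "(\<lambda>f. f n) ` A \<subseteq> P n"
    using A(1) by auto
  ultimately show ?thesis
    unfolding V_sets_def by simp
qed

lemma S_fin_V_lift_proj:
  fixes B :: "nat \<Rightarrow> (nat \<Rightarrow> 'a) set"
  assumes "S_fin_V (P n) (le n) (s n)"
    and "\<forall>m. B m \<in> V_sets (prod_carrier P) (prod_le le) s"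
  shows "\<exists>G. (\<forall>m. finite (G m) \<and> G m \<subseteq> B m) \<and>
    is_sup (P n) (le n) (\<Union>m. (\<lambda>f. f n) ` G m) (s n)"
proof -
  have "\<forall>m. (\<lambda>f. f n) ` B m \<in> V_sets (P n) (le n) (s n)"
    using assms(2) V_sets_prod_proj by blast
  from S_fin_VD[OF assms(1) this] obtain H
    where H: "\<forall>m. finite (H m) \<and> H m \<subseteq> (\<lambda>f. f n) ` B m"
      "is_sup (P n) (le n) (\<Union>m. H m) (s n)"
    by blast
  have "\<forall>m. \<exists>G. G \<subseteq> B m \<and> finite G \<and> H m = (\<lambda>f. f n) ` G"
    using H(1) finite_subset_image by metis
  then obtain G where G: "\<forall>m. G m \<subseteq> B m \<and> finite (G m) \<and> H m = (\<lambda>f. f n) ` G m"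
    by (metis choice)
  show ?thesis
    using G H(2) by (intro exI[of _ G]) auto
qed

lemma finite_selection_prod_decode:
  assumes "\<And>n m. finite (G n m)" "\<And>n m. G n m \<subseteq> A (prod_encode (n, m))"
  shows "\<exists>F. (\<forall>k. finite (F k) \<and> F k \<subseteq> A k) \<and> (\<Union>k. F k) = (\<Union>n m. G n m)"
proof (intro exI conjI allI)
  let ?F = "\<lambda>k. case_prod G (prod_decode k)"
  show "finite (?F k)" "?F k \<subseteq> A k" for k
    using assms[of "fst (prod_decode k)" "snd (prod_decode k)"] by (simp_all add: case_prod_beta)
  show "(\<Union>k. ?F k) = (\<Union>n m. G n m)"
  proof
    show "(\<Union>k. ?F k) \<subseteq> (\<Union>n m. G n m)"
      by (simp add: case_prod_beta) blast
    show "(\<Union>n m. G n m) \<subseteq> (\<Union>k. ?F k)"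
    proof (intro UN_least)
      fix n m
      show "G n m \<subseteq> (\<Union>k. ?F k)"
        using UN_upper[of "prod_encode (n, m)" UNIV ?F] by simp
    qed
  qed
qed

lemma S_fin_V_prod:
  assumes S: "\<And>n. S_fin_V (P n) (le n) (s n)"
  shows "S_fin_V (prod_carrier P) (prod_le le) s"
  unfolding S_fin_V_def
proof (intro allI impI)
  fix A :: "nat \<Rightarrow> (nat \<Rightarrow> 'a) set"
  assume AV: "\<forall>k. A k \<in> V_sets (prod_carrier P) (prod_le le) s"
  have "\<forall>n. \<exists>G. (\<forall>m. finite (G m) \<and> G m \<subseteq> A (prod_encode (n, m))) \<and>
      is_sup (P n) (le n) (\<Union>m. (\<lambda>f. f n) ` G m) (s n)"
  proof
    fix n
    show "\<exists>G. (\<forall>m. finite (G m) \<and> G m \<subseteq> A (prod_encode (n, m))) \<and>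
        is_sup (P n) (le n) (\<Union>m. (\<lambda>f. f n) ` G m) (s n)"
      using AV by (intro S_fin_V_lift_proj S) blast
  qed
  then have "\<exists>G. \<forall>n. (\<forall>m. finite (G n m) \<and> G n m \<subseteq> A (prod_encode (n, m))) \<and>
      is_sup (P n) (le n) (\<Union>m. (\<lambda>f. f n) ` G n m) (s n)"
    by (rule choice)
  then obtain G where G: "\<And>n m. finite (G n m)" "\<And>n m. G n m \<subseteq> A (prod_encode (n, m))"
    "\<And>n. is_sup (P n) (le n) (\<Union>m. (\<lambda>f. f n) ` G n m) (s n)"
    by blast
  obtain F where F: "\<forall>k. finite (F k) \<and> F k \<subseteq> A k" and F_G: "(\<Union>k. F k) = (\<Union>n m. G n m)"
    using finite_selection_prod_decode[of G A] G(1,2) by blast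
  have A_sub: "A k \<subseteq> prod_carrier P" and A_sup: "is_sup (P n) (le n) ((\<lambda>f. f n) ` A k) (s n)"
    for k n
    using AV V_sets_prod_proj[of "A k" P le s n] unfolding V_sets_def by blast+
  have A_upper: "le n (f n) (s n)" if "f \<in> A k" for f k n
    using A_sup[of n k] that unfolding is_sup_def by blast
  have "is_sup (P n) (le n) ((\<lambda>f. f n) ` (\<Union>k. F k)) (s n)" for n
  proof (rule is_sup_superset[OF G(3)[of n]])
    show "(\<Union>m. (\<lambda>f. f n) ` G n m) \<subseteq> (\<lambda>f. f n) ` (\<Union>k. F k)"
      unfolding F_G by (intro UN_least image_mono) blast
    show "\<forall>a\<in>(\<lambda>f. f n) ` (\<Union>k. F k). le n a (s n)"
      using F A_upper by blast
  qed
  moreover have "(\<Union>k. F k) \<subseteq> prod_carrier P"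
    using F A_sub by blast
  ultimately have "is_sup (prod_carrier P) (prod_le le) (\<Union>k. F k) s"
    using is_sup_prod_iff[of "\<Union>k. F k" P le s] by blast
  with F show "\<exists>F. (\<forall>k. finite (F k) \<and> F k \<subseteq> A k) \<and>
      is_sup (prod_carrier P) (prod_le le) (\<Union>k. F k) s"
    by blast
qed

theorem lemma2p1:
  fixes P :: "nat \<Rightarrow> 'a set" and le :: "nat \<Rightarrow> 'a \<Rightarrow> 'a \<Rightarrow> bool"
  assumes "\<And>n. pre_Pawlikowski (P n) (le n)"
    and "\<And>n. S_fin_V (P n) (le n) (ltop (P n) (le n))"
  shows "pre_Pawlikowski (prod_carrier P) (prod_le le) \<and>
         S_fin_V (prod_carrier P) (prod_le le) (\<lambda>n. ltop (P n) (le n))"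
  by (intro conjI pre_Pawlikowski_prod S_fin_V_prod assms)

end
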